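(* Let $\mathbf{k}_1,\mathbf{k}_2,\ldots\in\mathbb{R}^{d_k}$, $\mathbf{v}_1,\mathbf{v}_2,\ldots\in\mathbb{R}^{d_v}$, and nonzero scalars $\alpha_s,\beta_s,\gamma_s$. Let $\mathbf{S}_0=\mathbf{0}\in\mathbb{R}^{d_v\times d_k}$ and $$\mathbf{S}_s=\mathbf{S}_{s-1}(\alpha_s\mathbf{I}-\beta_s\mathbf{k}_s\mathbf{k}_s^\top)+\gamma_s\mathbf{v}_s\mathbf{k}_s^\top,\quad s\ge1.$$ Then for every $t\ge1$, $\operatorname{row}\mathbf{S}_t\subseteq\operatorname{span}\langle\mathbf{k}_1,\ldots,\mathbf{k}_t\rangle$ and $\operatorname{col}\mathbf{S}_t\subseteq\operatorname{span}\langle\mathbf{v}_1,\ldots,\mathbf{v}_t\rangle$. Consequently $\operatorname{rank}\mathbf{S}_t\le\min(\operatorname{rank}\mathbf{K}_t,\operatorname{rank}\mathbf{V}_t)$, where $\mathbf{K}_t=(\mathbf{k}_1,\ldots,\mathbf{k}_t)$ and $\mathbf{V}_t=(\mathbf{v}_1,\ldots,\mathbf{v}_t)$.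
   Context: $\operatorname{row}$ and $\operatorname{col}$ denote the row space (a subspace of $\mathbb{R}^{d_k}$) and column space (a subspace of $\mathbb{R}^{d_v}$) of a $d_v\times d_k$ matrix. *)

theory Defs
  imports "HOL-Analysis.Analysis"
begin

definition outer :: "real^'m \<Rightarrow> real^'n \<Rightarrow> real^'n^'m" where
  "outer v k = (\<chi> i j. v $ i * k $ j)"

definition row_space :: "real^'n^'m \<Rightarrow> (real^'n) set" where
  "row_space A = span (rows A)"

definition col_space :: "real^'n^'m \<Rightarrow> (real^'m) set" where
  "col_space A = span (columns A)"

text \<open>Rank of the matrix whose columns are the vectors x 1, ..., x t (its column rank).\<close>
definition rank_cols :: "(nat \<Rightarrow> real^'n) \<Rightarrow> nat \<Rightarrow> nat" where
  "rank_cols x t = dim (span (x ` {1..t}))"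

end

theory Submission
  imports Defs
begin

text \<open>The update S \<mapsto> S (\<alpha> I - \<beta> k k^T) + \<gamma> v k^T equals \<alpha> S + u k^T with
  u = \<gamma> v - \<beta> S k. Every row of the rank-one correction u k^T is a multiple of k, and every
  column a multiple of u, which lies in the span of v and the columns of S. Hence, by induction on t, the rows of
  S t stay in span k 1, ..., k t and its columns in span v 1, ..., v t; the rank bounds follow
  because the rank is the dimension of both the row space and the column space.\<close>

lemma matrix_mult_diff_ldistrib:
  fixes A :: "'a::comm_ring_1^'n^'m"
  shows "A ** (B - C) = A ** B - A ** C"
  by (simp add: vec_eq_iff matrix_matrix_mult_def right_diff_distrib sum_subtractf)

lemma matrix_mult_scaleR_right:
  fixes A :: "real^'n^'m" and B :: "real^'p^'n"
  shows "A ** (c *\<^sub>R B) = c *\<^sub>R (A ** B)"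
  by (simp add: vec_eq_iff matrix_matrix_mult_def sum_distrib_left mult.left_commute)

lemma matrix_mult_outer:
  fixes A :: "real^'n^'m"
  shows "A ** outer u k = outer (A *v u) k"
  by (simp add: vec_eq_iff matrix_matrix_mult_def matrix_vector_mult_def outer_def
      sum_distrib_right mult.assoc)

lemma row_rank_one_update:
  "row i (a *\<^sub>R A + outer u k) = a *\<^sub>R row i A + u $ i *\<^sub>R k"
  by (simp add: vec_eq_iff row_def outer_def)

lemma column_rank_one_update:
  "column j (a *\<^sub>R A + outer u k) = a *\<^sub>R column j A + k $ j *\<^sub>R u"
  by (simp add: vec_eq_iff column_def outer_def mult.commute)

lemma delta_update_eq_rank_one_update:
  fixes A :: "real^'n^'m"
  shows "A ** (a *\<^sub>R mat 1 - b *\<^sub>R outer k k) + c *\<^sub>R outer w k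
     = a *\<^sub>R A + outer (c *\<^sub>R w - b *\<^sub>R (A *v k)) k"
proof -
  have "A ** (a *\<^sub>R mat 1 - b *\<^sub>R outer k k) = a *\<^sub>R A - b *\<^sub>R outer (A *v k) k"
    by (simp add: matrix_mult_diff_ldistrib matrix_mult_scaleR_right matrix_mult_outer)
  then show ?thesis
    by (simp add: vec_eq_iff outer_def algebra_simps)
qed

lemma row_space_subset_iff:
  fixes A :: "real^'n^'m"
  assumes "subspace W"
  shows "row_space A \<subseteq> W \<longleftrightarrow> (\<forall>i. row i A \<in> W)"
proof
  show "\<forall>i. row i A \<in> W" if "row_space A \<subseteq> W"
  proof
    fix i
    have "row i A \<in> rows A"
      unfolding rows_def by blast
    then show "row i A \<in> W"
      using that span_base unfolding row_space_def by blast
  qed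
  show "row_space A \<subseteq> W" if "\<forall>i. row i A \<in> W"
  proof -
    have "rows A \<subseteq> W"
      using that unfolding rows_def by blast
    then show ?thesis
      unfolding row_space_def using assms by (rule span_minimal)
  qed
qed

lemma col_space_subset_iff:
  fixes A :: "real^'n^'m"
  assumes "subspace W"
  shows "col_space A \<subseteq> W \<longleftrightarrow> (\<forall>j. column j A \<in> W)"
proof
  show "\<forall>j. column j A \<in> W" if "col_space A \<subseteq> W"
  proof
    fix j
    have "column j A \<in> columns A"
      unfolding columns_def by blast
    then show "column j A \<in> W"
      using that span_base unfolding col_space_def by blast
  qed
  show "col_space A \<subseteq> W" if "\<forall>j. column j A \<in> W"
  proof -
    have "columns A \<subseteq> W"
      using that unfolding columns_def by blast
    then show ?thesis
      unfolding col_space_def using assms by (rule span_minimal)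
  qed
qed

lemma row_space_rank_one_update_subset:
  fixes A :: "real^'n^'m"
  assumes "subspace W" and "row_space A \<subseteq> W" and "k \<in> W"
  shows "row_space (a *\<^sub>R A + outer u k) \<subseteq> W"
proof -
  have "row i A \<in> W" for i
    using assms(2) unfolding row_space_subset_iff[OF assms(1)] by blast
  then have "row i (a *\<^sub>R A + outer u k) \<in> W" for i
    unfolding row_rank_one_update using assms(1,3) by (intro subspace_add subspace_scale)
  then show ?thesis
    unfolding row_space_subset_iff[OF assms(1)] by blast
qed

lemma col_space_rank_one_update_subset:
  fixes A :: "real^'n^'m"
  assumes "subspace W" and "col_space A \<subseteq> W" and "u \<in> W"
  shows "col_space (a *\<^sub>R A + outer u k) \<subseteq> W"
proof -
  have "column j A \<in> W" for j
    using assms(2) unfolding col_space_subset_iff[OF assms(1)] by blast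
  then have "column j (a *\<^sub>R A + outer u k) \<in> W" for j
    unfolding column_rank_one_update using assms(1,3) by (intro subspace_add subspace_scale)
  then show ?thesis
    unfolding col_space_subset_iff[OF assms(1)] by blast
qed

lemma rank_le_dim_of_row_space_subset:
  fixes A :: "real^'n^'m"
  shows "row_space A \<subseteq> W \<Longrightarrow> rank A \<le> dim W"
  unfolding row_space_def row_rank_def by (metis dim_span dim_subset)

lemma rank_le_dim_of_col_space_subset:
  fixes A :: "real^'n^'m"
  shows "col_space A \<subseteq> W \<Longrightarrow> rank A \<le> dim W"
  unfolding col_space_def column_rank_def by (metis dim_span dim_subset)

lemma row_space_zero: "row_space (0 :: real^'n^'m) = {0}"
  by (simp add: row_space_def rows_def row_def zero_vec_def[symmetric])

lemma col_space_zero: "col_space (0 :: real^'n^'m) = {0}"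
  by (simp add: col_space_def columns_def column_def zero_vec_def[symmetric])

lemma delta_update_spaces_subset:
  fixes A :: "real^'n^'m"
  assumes "subspace K" and "subspace V"
    and "row_space A \<subseteq> K" and "col_space A \<subseteq> V" and "k \<in> K" and "w \<in> V"
  shows "row_space (A ** (a *\<^sub>R mat 1 - b *\<^sub>R outer k k) + c *\<^sub>R outer w k) \<subseteq> K
    \<and> col_space (A ** (a *\<^sub>R mat 1 - b *\<^sub>R outer k k) + c *\<^sub>R outer w k) \<subseteq> V"
proof -
  have "A *v k \<in> V"
    using matrix_vector_mult_in_columnspace assms(4) unfolding col_space_def by blast
  then have "c *\<^sub>R w - b *\<^sub>R (A *v k) \<in> V"
    using assms(2,6) by (intro subspace_diff subspace_scale)
  then show ?thesis
    unfolding delta_update_eq_rank_one_update using assms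
    by (simp add: row_space_rank_one_update_subset col_space_rank_one_update_subset)
qed

theorem propositionF1:
  fixes k :: "nat \<Rightarrow> real^'dk" and v :: "nat \<Rightarrow> real^'dv"
    and \<alpha> \<beta> \<gamma> :: "nat \<Rightarrow> real"
    and S :: "nat \<Rightarrow> real^'dk^'dv"
  assumes nz: "\<And>s. s \<ge> 1 \<Longrightarrow> \<alpha> s \<noteq> 0 \<and> \<beta> s \<noteq> 0 \<and> \<gamma> s \<noteq> 0"
    and S0: "S 0 = 0"
    and Ss: "\<And>s. s \<ge> 1 \<Longrightarrow>
      S s = S (s - 1) ** (\<alpha> s *\<^sub>R mat 1 - \<beta> s *\<^sub>R outer (k s) (k s)) + \<gamma> s *\<^sub>R outer (v s) (k s)"
  shows "\<forall>t \<ge> 1.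
      row_space (S t) \<subseteq> span (k ` {1..t}) \<and>
      col_space (S t) \<subseteq> span (v ` {1..t}) \<and>
      rank (S t) \<le> min (rank_cols k t) (rank_cols v t)"
proof -
  let ?K = "\<lambda>t. span (k ` {1..t})" and ?V = "\<lambda>t. span (v ` {1..t})"
  have spaces: "row_space (S t) \<subseteq> ?K t \<and> col_space (S t) \<subseteq> ?V t" for t
  proof (induction t)
    case 0
    show ?case
      by (simp add: S0 row_space_zero col_space_zero span_zero)
  next
    case (Suc t)
    have "?K t \<subseteq> ?K (Suc t)" and "?V t \<subseteq> ?V (Suc t)"
      by (simp_all add: span_mono image_mono)
    moreover have "k (Suc t) \<in> ?K (Suc t)" and "v (Suc t) \<in> ?V (Suc t)"
      by (auto intro: span_base)
    ultimately show ?case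
      unfolding Ss[of "Suc t", simplified] using Suc
      by (intro delta_update_spaces_subset subspace_span) auto
  qed
  have rank_le: "rank (S t) \<le> rank_cols k t \<and> rank (S t) \<le> rank_cols v t" for t
    using spaces[of t] rank_le_dim_of_row_space_subset[of "S t" "?K t"]
      rank_le_dim_of_col_space_subset[of "S t" "?V t"]
    unfolding rank_cols_def by blast
  show ?thesis
    unfolding min.bounded_iff using spaces rank_le by blast
qed

end
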